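(* Let $W(x,y)=w(d(x,y))$ be an ultrametric graphon on $[0,1]$ (setting described in the context), with deterministic ultrametric Laplacian $L_d^k$. If $E_I^k$ is the spectral projector of $L_d^k$ attached to an interval $I$ of level $\ell<M$, then there exists $E_I\in L^2([0,1]\times[0,1])$ such that $\|T(N_kE_I^k)-T(E_I)\|_{HS}\to0$ as $k\to\infty$.
   Context: Nested partitions: fix $M\ge1$ and finite partitions $\Upsilon_1,\dots,\Upsilon_M$ of $[0,1]$ into intervals with $\Upsilon_1=\{[0,1]\}$, each interval of $\Upsilon_\ell$ ($\ell<M$) being a disjoint union of at least two intervals of $\Upsilon_{\ell+1}$; an interval of $\Upsilon_\ell$ has level $\ell$ and its children are the intervals of $\Upsilon_{\ell+1}$ it contains. Heights $h(I)>0$ with $h(I)<h(J)$ when $I\subsetneq J$; $d(x,x)=0$ and $d(x,y)=h(J)$ for $x\ne y$ with $J$ the smallest interval containing both. Ultrametric graphon $W=w\circ d$, $w:[0,\infty)\to[0,1]$ positive. Sampling: last-level intervals have rational lengths; $N$ = lcm of denominators, $N_k=kN$; each last-level interval $I$ receives $N_k\mu(I)$ equispaced points $x_1<\dots<x_{N_k}$, the $i$-th lying in the $i$-th interval of the uniform partition of $[0,1]$ into $N_k$ intervals of length $1/N_k$; $m$ is counting measure on the sample. $L_d^k=A_d^k-D_d^k$ with $A_d^k=(W(x_i,x_j))$, $D_d^k$ the row-sum diagonal. The spectral projector $E_I^k$ attached to $I$ is the $N_k\times N_k$ matrix with $E_I^k(x,y)=-\frac1{m(I)}$ if $x,y\in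 I$ are in different children of $I$, $\frac1{m(J)}-\frac1{m(I)}$ if $x,y$ lie in the same child $J$ of $I$, and $0$ if $x\notin I$ or $y\notin I$. For an $n\times n$ matrix $A$, $T(A)$ is the integral operator on $L^2([0,1])$ with kernel $A(x,y)=A_{ij}$ for $x\in[\frac{i-1}{n},\frac in)$, $y\in[\frac{j-1}{n},\frac jn)$; for a kernel $K\in L^2([0,1]^2)$, $T(K)f(x)=\int_0^1K(x,y)f(y)\,dy$; $\|\cdot\|_{HS}$ is the Hilbert–Schmidt norm. *)

theory Defs
  imports "HOL-Analysis.Analysis"
begin

definition nested_partitions :: "nat \<Rightarrow> (nat \<Rightarrow> real set set) \<Rightarrow> bool" where
  "nested_partitions M Ups \<longleftrightarrow>
     1 \<le> M \<and> Ups 1 = {{0..1}} \<and>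
     (\<forall>l\<in>{1..M}. finite (Ups l) \<and> pairwise disjnt (Ups l) \<and> \<Union>(Ups l) = {0..1} \<and>
        (\<forall>I\<in>Ups l. is_interval I \<and> I \<noteq> {})) \<and>
     (\<forall>l. 1 \<le> l \<and> l < M \<longrightarrow> (\<forall>I\<in>Ups l.
        I = \<Union>{J\<in>Ups (Suc l). J \<subseteq> I} \<and> 2 \<le> card {J\<in>Ups (Suc l). J \<subseteq> I}))"

definition children :: "(nat \<Rightarrow> real set set) \<Rightarrow> nat \<Rightarrow> real set \<Rightarrow> real set set" where
  "children Ups l I = {J\<in>Ups (Suc l). J \<subseteq> I}"

abbreviation len :: "real set \<Rightarrow> real" where
  "len I \<equiv> measure lborel I"

definition rat_denom :: "real \<Rightarrow> nat" where
  "rat_denom x = nat (snd (quotient_of (THE r. x = of_rat r)))"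

definition sample_N :: "nat \<Rightarrow> (nat \<Rightarrow> real set set) \<Rightarrow> nat" where
  "sample_N M Ups = Lcm ((\<lambda>I. rat_denom (len I)) ` Ups M)"

definition valid_sample :: "nat \<Rightarrow> (nat \<Rightarrow> real set set) \<Rightarrow> nat \<Rightarrow> (nat \<Rightarrow> real) \<Rightarrow> bool" where
  "valid_sample M Ups n xs \<longleftrightarrow>
     strict_mono_on {1..n} xs \<and>
     (\<forall>i\<in>{1..n}. (real i - 1) / real n \<le> xs i \<and> xs i < real i / real n) \<and>
     (\<forall>I\<in>Ups M. real (card {i\<in>{1..n}. xs i \<in> I}) = real n * len I) \<and>
     (\<forall>I\<in>Ups M. \<forall>i j. 1 \<le> i \<and> Suc i \<le> n \<and> 1 \<le> j \<and> Suc j \<le> n \<and>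
        xs i \<in> I \<and> xs (Suc i) \<in> I \<and> xs j \<in> I \<and> xs (Suc j) \<in> I \<longrightarrow>
        xs (Suc i) - xs i = xs (Suc j) - xs j)"

definition mcount :: "nat \<Rightarrow> (nat \<Rightarrow> real) \<Rightarrow> real set \<Rightarrow> real" where
  "mcount n xs S = real (card {i\<in>{1..n}. xs i \<in> S})"

text \<open>Spectral projector E_I^k (entries indexed by 1..n).\<close>
definition proj_matrix ::
  "(nat \<Rightarrow> real set set) \<Rightarrow> nat \<Rightarrow> real set \<Rightarrow> nat \<Rightarrow> (nat \<Rightarrow> real) \<Rightarrow> nat \<Rightarrow> nat \<Rightarrow> real" where
  "proj_matrix Ups l I n xs i j =
     (if xs i \<in> I \<and> xs j \<in> I then
        (if \<exists>J\<in>children Ups l I. xs i \<in> J \<and> xs j \<in> J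
         then 1 / mcount n xs (THE J. J \<in> children Ups l I \<and> xs i \<in> J)
              - 1 / mcount n xs I
         else - 1 / mcount n xs I)
      else 0)"

definition step_kernel :: "nat \<Rightarrow> (nat \<Rightarrow> nat \<Rightarrow> real) \<Rightarrow> real \<times> real \<Rightarrow> real" where
  "step_kernel n A = (\<lambda>(x, y). A (nat \<lfloor>real n * x\<rfloor> + 1) (nat \<lfloor>real n * y\<rfloor> + 1))"

definition L2_unit_square :: "(real \<times> real \<Rightarrow> real) \<Rightarrow> bool" where
  "L2_unit_square K \<longleftrightarrow> set_borel_measurable lborel ({0..1} \<times> {0..1}) K \<and>
     set_integrable lborel ({0..1} \<times> {0..1}) (\<lambda>z. (K z)\<^sup>2)"

text \<open>Hilbert-Schmidt norm of T(K1) - T(K2) = L^2 norm of the kernel K1 - K2 on [0,1]^2.\<close>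
definition hs_dist :: "(real \<times> real \<Rightarrow> real) \<Rightarrow> (real \<times> real \<Rightarrow> real) \<Rightarrow> real" where
  "hs_dist K1 K2 = sqrt (LINT z:{0..1} \<times> {0..1}|lborel. (K1 z - K2 z)\<^sup>2)"

end

theory Submission
  imports Defs
begin

text \<open>Every interval of the hierarchy is a union of last-level intervals, so a sample of
  size n = N_k puts exactly n |J| points into each such interval J. Hence n E_I^k is the
  restriction to the sample of the kernel E_I = sum_J 1_(J x J) / |J| - 1_(I x I) / |I|, where J
  ranges over the children of I. The step kernel of n E_I^k evaluates E_I at the sample points
  of the cells of (a, b); a sample point lies within 1/n of every point of its cell, so the two
  kernels agree unless a or b lies within 1/n of an endpoint of I or of one of its children.
  Both kernels are bounded, so the squared Hilbert-Schmidt distance is O(1/n).\<close>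

lemma nested_partitions_levelD:
  assumes "nested_partitions M Ups" "l \<in> {1..M}"
  shows "finite (Ups l)" "pairwise disjnt (Ups l)" "\<Union>(Ups l) = {0..1}" "\<forall>J\<in>Ups l. is_interval J"
proof -
  have "\<forall>l\<in>{1..M}. finite (Ups l) \<and> pairwise disjnt (Ups l) \<and> \<Union>(Ups l) = {0..1} \<and>
      (\<forall>J\<in>Ups l. is_interval J \<and> J \<noteq> {})"
    using assms(1) unfolding nested_partitions_def by (elim conjE)
  then show "finite (Ups l)" "pairwise disjnt (Ups l)" "\<Union>(Ups l) = {0..1}" "\<forall>J\<in>Ups l. is_interval J"
    using assms(2) by blast+
qed

lemma nested_partitions_Union_children:
  assumes "nested_partitions M Ups" "1 \<le> l" "l < M" "I \<in> Ups l"
  shows "I = \<Union>(children Ups l I)"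
proof -
  have "\<forall>l. 1 \<le> l \<and> l < M \<longrightarrow> (\<forall>I\<in>Ups l. I = \<Union>{J\<in>Ups (Suc l). J \<subseteq> I} \<and> 2 \<le> card {J\<in>Ups (Suc l). J \<subseteq> I})"
    using assms(1) unfolding nested_partitions_def by (elim conjE)
  then show ?thesis
    using assms(2-4) unfolding children_def by blast
qed

lemma nested_partitions_Union_last_level:
  assumes part: "nested_partitions M Ups"
  shows "l \<in> {1..M} \<Longrightarrow> J \<in> Ups l \<Longrightarrow> J = \<Union>{K\<in>Ups M. K \<subseteq> J}"
proof (induction "M - l" arbitrary: l J)
  case 0
  then show ?case by auto
next
  case (Suc d)
  then have J: "J = \<Union>(children Ups l J)"
    using nested_partitions_Union_children[OF part] by simp
  have C: "C = \<Union>{K\<in>Ups M. K \<subseteq> C}" if "C \<in> children Ups l J" for C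
    using Suc.hyps(1)[of "Suc l" C] Suc.hyps(2) Suc.prems(1) that by (simp add: children_def)
  show ?case
  proof
    show "J \<subseteq> \<Union>{K\<in>Ups M. K \<subseteq> J}"
    proof
      fix z assume "z \<in> J"
      then obtain C where C_child: "C \<in> children Ups l J" and "z \<in> C" using J by blast
      then obtain K where "K \<in> Ups M" "K \<subseteq> C" "z \<in> K" using C by blast
      moreover have "C \<subseteq> J" using C_child by (simp add: children_def)
      ultimately show "z \<in> \<Union>{K\<in>Ups M. K \<subseteq> J}" by blast
    qed
  qed blast
qed

lemma nested_partitions_children:
  assumes part: "nested_partitions M Ups" and lev: "1 \<le> l" "l < M"
  shows "children Ups l I \<subseteq> Ups (Suc l)" "finite (children Ups l I)"
    "pairwise disjnt (children Ups l I)"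
proof -
  show sub: "children Ups l I \<subseteq> Ups (Suc l)" by (auto simp: children_def)
  have "Suc l \<in> {1..M}" using lev by simp
  note level = nested_partitions_levelD[OF part this]
  show "finite (children Ups l I)" using finite_subset[OF sub level(1)] .
  show "pairwise disjnt (children Ups l I)" using pairwise_subset[OF level(2) sub] .
qed

lemma is_interval_insert_children:
  assumes part: "nested_partitions M Ups" and lev: "1 \<le> l" "l < M" and I: "I \<in> Ups l"
  shows "\<forall>S\<in>insert I (children Ups l I). is_interval S"
proof -
  have "l \<in> {1..M}" "Suc l \<in> {1..M}" using lev by auto
  then show ?thesis
    using nested_partitions_levelD(4)[OF part] I nested_partitions_children(1)[OF part lev] by blast
qed

lemma fmeasurable_unit_interval: "{0..1::real} \<in> fmeasurable lborel"
  by (metis cbox_interval fmeasurable_cbox)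

lemma fmeasurable_interval_in_unit:
  fixes S :: "real set"
  assumes "is_interval S" "S \<subseteq> {0..1}"
  shows "S \<in> fmeasurable lborel"
  by (rule fmeasurableI2[OF fmeasurable_unit_interval assms(2)])
    (simp add: real_interval_borel_measurable[OF assms(1)])

lemma mcount_eq_len:
  assumes part: "nested_partitions M Ups" and vs: "valid_sample M Ups n xs"
    and l: "l \<in> {1..M}" and J: "J \<in> Ups l"
  shows "mcount n xs J = real n * len J"
proof -
  define S where "S = {K\<in>Ups M. K \<subseteq> J}"
  have "M \<in> {1..M}" using l by simp
  note last = nested_partitions_levelD[OF part this]
  have sub: "S \<subseteq> Ups M" by (auto simp: S_def)
  have fin: "finite S" using finite_subset[OF sub last(1)] .
  have disj: "pairwise disjnt S" using pairwise_subset[OF last(2) sub] .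
  have meas: "K \<in> fmeasurable lborel" if "K \<in> S" for K
    using that sub last(3,4) by (blast intro: fmeasurable_interval_in_unit)
  have count: "\<forall>K\<in>Ups M. real (card {i\<in>{1..n}. xs i \<in> K}) = real n * len K"
    using vs unfolding valid_sample_def by (elim conjE)
  have JS: "J = \<Union>S" using nested_partitions_Union_last_level[OF part l J] by (simp add: S_def)
  have "{i\<in>{1..n}. xs i \<in> \<Union>S} = (\<Union>K\<in>S. {i\<in>{1..n}. xs i \<in> K})" by blast
  then have "mcount n xs J = real (card (\<Union>K\<in>S. {i\<in>{1..n}. xs i \<in> K}))"
    unfolding mcount_def JS by simp
  also have "\<dots> = (\<Sum>K\<in>S. mcount n xs K)"
    unfolding mcount_def using fin disj
    by (subst card_UN_disjoint) (auto simp: pairwise_def disjnt_def)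
  also have "\<dots> = (\<Sum>K\<in>S. real n * len K)"
    using count sub unfolding mcount_def by (intro sum.cong) auto
  also have "\<dots> = real n * len (\<Union>S)"
    using measure_Union'[OF fin meas disj] by (simp add: sum_distrib_left)
  finally show ?thesis using JS by simp
qed

lemma sample_N_pos:
  assumes "nested_partitions M Ups"
  shows "sample_N M Ups > 0"
proof -
  have "1 \<le> M" using assms unfolding nested_partitions_def by (elim conjE)
  then have fin: "finite (Ups M)" using nested_partitions_levelD(1)[OF assms] by simp
  have "rat_denom x > 0" for x
    unfolding rat_denom_def using quotient_of_denom_pos' by simp
  then have "0 \<notin> (\<lambda>J. rat_denom (len J)) ` Ups M" by (metis imageE less_irrefl)
  then have "Lcm ((\<lambda>J. rat_denom (len J)) ` Ups M) \<noteq> 0"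
    using Lcm_0_iff[of "(\<lambda>J. rat_denom (len J)) ` Ups M"] fin by simp
  then show ?thesis unfolding sample_N_def by simp
qed

lemma sample_point_close:
  assumes vs: "valid_sample M Ups n xs" and n: "n > 0" and a: "0 \<le> a" "a < 1"
  defines "i \<equiv> nat \<lfloor>real n * a\<rfloor> + 1"
  shows "\<bar>xs i - a\<bar> < 1 / real n"
proof -
  have "real n * a < real n" using n a by simp
  then have fl: "0 \<le> \<lfloor>real n * a\<rfloor>" "\<lfloor>real n * a\<rfloor> < int n"
    using n a by (simp_all add: floor_less_iff)
  then have "nat \<lfloor>real n * a\<rfloor> < n" by (simp add: nat_less_iff)
  then have i: "i \<in> {1..n}" unfolding i_def by simp
  have "real i - 1 \<le> real n * a" "real n * a < real i"
    unfolding i_def using fl(1) by linarith+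
  then have "(real i - 1) / real n \<le> a" "a < real i / real n"
    using n by (simp_all add: pos_divide_le_eq pos_less_divide_eq mult.commute)
  moreover have "\<forall>i\<in>{1..n}. (real i - 1) / real n \<le> xs i \<and> xs i < real i / real n"
    using vs unfolding valid_sample_def by blast
  then have "(real i - 1) / real n \<le> xs i" "xs i < real i / real n"
    using i by blast+
  ultimately show ?thesis
    unfolding diff_divide_distrib by linarith
qed

lemma interval_endpoint_between:
  fixes S :: "real set"
  assumes S: "is_interval S" and p: "p \<in> S" and q: "q \<notin> S"
  shows "\<exists>e\<in>{Inf S, Sup S}. \<bar>p - e\<bar> \<le> \<bar>p - q\<bar> \<and> \<bar>q - e\<bar> \<le> \<bar>p - q\<bar>"
proof -
  have between: "x \<in> S" if "u \<in> S" "v \<in> S" "u \<le> x" "x \<le> v" for u v x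
    using S that unfolding is_interval_1 by blast
  show ?thesis
  proof (cases "q < p")
    case True
    have below: "q \<le> s" if "s \<in> S" for s
      using between[OF that p, of q] q True by (meson less_imp_le not_le)
    have "q \<le> Inf S"
      using p below by (intro cInf_greatest) auto
    moreover have "Inf S \<le> p"
      using cInf_lower[OF p bdd_belowI[OF below]] .
    ultimately show ?thesis using True by auto
  next
    case False
    have above: "s \<le> q" if "s \<in> S" for s
      using between[OF p that, of q] q False by (meson less_imp_le not_le)
    have "Sup S \<le> q"
      using p above by (intro cSup_least) auto
    moreover have "p \<le> Sup S"
      using cSup_upper[OF p bdd_aboveI[OF above]] .
    ultimately show ?thesis using False by auto
  qed
qed

lemma sample_point_same_side:
  assumes vs: "valid_sample M Ups n xs" and n: "n > 0" and a: "0 \<le> a" "a < 1"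
    and S: "is_interval S" and far: "\<forall>e\<in>{Inf S, Sup S}. 1 / real n \<le> \<bar>a - e\<bar>"
  shows "xs (nat \<lfloor>real n * a\<rfloor> + 1) \<in> S \<longleftrightarrow> a \<in> S"
proof (rule ccontr)
  define x where "x = xs (nat \<lfloor>real n * a\<rfloor> + 1)"
  have close: "\<bar>x - a\<bar> < 1 / real n"
    using sample_point_close[OF vs n a] by (simp add: x_def)
  assume "\<not> (x \<in> S \<longleftrightarrow> a \<in> S)"
  then obtain e where "e \<in> {Inf S, Sup S}" "\<bar>a - e\<bar> \<le> \<bar>x - a\<bar>"
    using interval_endpoint_between[OF S, of x a] interval_endpoint_between[OF S, of a x]
    by (metis abs_minus_commute)
  then show False using far close by auto
qed

text \<open>The point 1 is included because its cell index \<open>nat \<lfloor>n * 1\<rfloor> + 1 = n + 1\<close> lies outside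
  the sample.\<close>

definition endpoint_nbhd :: "real set set \<Rightarrow> real \<Rightarrow> real set" where
  "endpoint_nbhd T r = (\<Union>e\<in>insert 1 (Inf ` T \<union> Sup ` T). ball e r)"

lemma sample_point_same_side_off_endpoints:
  assumes vs: "valid_sample M Ups n xs" and n: "n > 0" and T: "\<forall>S\<in>T. is_interval S" "S \<in> T"
    and a: "a \<in> {0..1}" "a \<notin> endpoint_nbhd T (1 / real n)"
  shows "xs (nat \<lfloor>real n * a\<rfloor> + 1) \<in> S \<longleftrightarrow> a \<in> S"
proof -
  have far: "1 / real n \<le> \<bar>a - e\<bar>" if "e \<in> insert 1 (Inf ` T \<union> Sup ` T)" for e
  proof -
    have "a \<notin> ball e (1 / real n)" using a(2) that unfolding endpoint_nbhd_def by blast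
    then show ?thesis by (simp add: dist_real_def abs_minus_commute)
  qed
  have "a < 1"
  proof (rule ccontr)
    assume "\<not> a < 1"
    then have "a = 1" using a(1) by simp
    then show False using far[of 1] n by simp
  qed
  moreover have "\<forall>e\<in>{Inf S, Sup S}. 1 / real n \<le> \<bar>a - e\<bar>"
    using far T(2) by blast
  ultimately show ?thesis
    using sample_point_same_side[OF vs n _ _ bspec[OF T]] a(1) by simp
qed

lemma emeasure_lborel_Times:
  fixes A :: "'a::euclidean_space set" and B :: "'b::euclidean_space set"
  assumes "A \<in> sets borel" "B \<in> sets borel"
  shows "A \<times> B \<in> sets lborel" "emeasure lborel (A \<times> B) = emeasure lborel A * emeasure lborel B"
proof -
  have "A \<times> B \<in> sets (lborel \<Otimes>\<^sub>M lborel)" using assms by simp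
  then show "A \<times> B \<in> sets lborel" unfolding lborel_prod .
  have "emeasure (lborel \<Otimes>\<^sub>M lborel) (A \<times> B) = emeasure lborel A * emeasure lborel B"
    using assms by (intro lborel.emeasure_pair_measure_Times) auto
  then show "emeasure lborel (A \<times> B) = emeasure lborel A * emeasure lborel B"
    unfolding lborel_prod .
qed

lemma fmeasurable_lborel_Times:
  fixes A :: "'a::euclidean_space set" and B :: "'b::euclidean_space set"
  assumes A: "A \<in> fmeasurable lborel" and B: "B \<in> fmeasurable lborel"
  shows "A \<times> B \<in> fmeasurable lborel" "measure lborel (A \<times> B) = measure lborel A * measure lborel B"
proof -
  have sets: "A \<in> sets borel" "B \<in> sets borel" using A B by auto
  note AB = emeasure_lborel_Times[OF sets]
  have "emeasure lborel A < \<infinity>" "emeasure lborel B < \<infinity>" using A B by (auto simp: fmeasurable_def)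
  then show "A \<times> B \<in> fmeasurable lborel"
    using AB by (intro fmeasurableI) (auto simp: ennreal_mult_less_top)
  show "measure lborel (A \<times> B) = measure lborel A * measure lborel B"
    unfolding measure_def AB(2) by (simp add: enn2real_mult)
qed

lemma set_integral_square_le_strips:
  fixes F :: "real \<times> real \<Rightarrow> real"
  assumes B: "B \<in> fmeasurable lborel" and bound: "\<And>z. \<bar>F z\<bar> \<le> C"
    and zero: "\<And>a b. a \<in> {0..1} \<Longrightarrow> b \<in> {0..1} \<Longrightarrow> a \<notin> B \<Longrightarrow> b \<notin> B \<Longrightarrow> F (a, b) = 0"
  shows "(LINT z:{0..1} \<times> {0..1}|lborel. (F z)\<^sup>2) \<le> 2 * C\<^sup>2 * measure lborel B"
proof -
  let ?U = "{0..1::real}"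
  note U = fmeasurable_unit_interval
  note strip1 = fmeasurable_lborel_Times[OF B U] and strip2 = fmeasurable_lborel_Times[OF U B]
  have F2: "(F z)\<^sup>2 \<le> C\<^sup>2" for z
    using bound[of z] abs_le_square_iff[of "F z" C] by auto
  have pointwise: "indicator (?U \<times> ?U) z * (F z)\<^sup>2
      \<le> C\<^sup>2 * indicator (B \<times> ?U) z + C\<^sup>2 * indicator (?U \<times> B) z" for z
  proof (cases "z \<in> B \<times> ?U \<union> ?U \<times> B")
    case True
    then have "C\<^sup>2 \<le> C\<^sup>2 * indicator (B \<times> ?U) z + C\<^sup>2 * indicator (?U \<times> B) z"
      by (auto simp: indicator_def)
    moreover have "indicator (?U \<times> ?U) z * (F z)\<^sup>2 \<le> C\<^sup>2"
      using F2[of z] by (simp add: indicator_def)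
    ultimately show ?thesis by linarith
  next
    case False
    then have "indicator (?U \<times> ?U) z * (F z)\<^sup>2 = 0"
      using zero[of "fst z" "snd z"] by (cases z) (auto simp: indicator_def)
    moreover have "C\<^sup>2 * indicator (B \<times> ?U) z + C\<^sup>2 * indicator (?U \<times> B) z = 0"
      using False by simp
    ultimately show ?thesis by linarith
  qed
  have "(LINT z:?U \<times> ?U|lborel. (F z)\<^sup>2) = (\<integral>z. indicator (?U \<times> ?U) z * (F z)\<^sup>2 \<partial>lborel)"
    by (simp add: set_lebesgue_integral_def)
  also have "\<dots> \<le> (\<integral>z. C\<^sup>2 * indicator (B \<times> ?U) z + C\<^sup>2 * indicator (?U \<times> B) z \<partial>lborel)"
    using strip1(1) strip2(1) pointwise
    by (intro integral_mono') (auto simp: fmeasurable_def)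
  also have "\<dots> = C\<^sup>2 * measure lborel (B \<times> ?U) + C\<^sup>2 * measure lborel (?U \<times> B)"
    using strip1(1) strip2(1) by (simp add: fmeasurable_def)
  also have "\<dots> = 2 * C\<^sup>2 * measure lborel B"
    unfolding strip1(2) strip2(2) by simp
  finally show ?thesis .
qed

lemma hs_dist_nonneg: "0 \<le> hs_dist K1 K2"
proof -
  have "0 \<le> (\<integral>z. indicator ({0..1} \<times> {0..1}) z * (K1 z - K2 z)\<^sup>2 \<partial>lborel)"
    by (intro integral_nonneg_AE AE_I2) simp
  then show ?thesis unfolding hs_dist_def set_lebesgue_integral_def by simp
qed

lemma L2_unit_square_bounded:
  assumes K: "K \<in> borel_measurable lborel" and bound: "\<And>z. \<bar>K z\<bar> \<le> C"
  shows "L2_unit_square K"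
proof -
  let ?Sq = "{0..1::real} \<times> {0..1::real}"
  have Sq: "?Sq \<in> fmeasurable lborel"
    using fmeasurable_lborel_Times(1)[OF fmeasurable_unit_interval fmeasurable_unit_interval] .
  have "integrable lborel (\<lambda>z. indicator ?Sq z *\<^sub>R (K z)\<^sup>2)"
  proof (rule Bochner_Integration.integrable_bound)
    show "integrable lborel (\<lambda>z. C\<^sup>2 * indicator ?Sq z :: real)"
      using Sq by (intro integrable_mult_right integrable_real_indicator) (auto simp: fmeasurable_def)
    have "(K z)\<^sup>2 \<le> C\<^sup>2" for z
      using bound[of z] abs_le_square_iff[of "K z" C] by auto
    then show "AE z in lborel. norm (indicator ?Sq z *\<^sub>R (K z)\<^sup>2) \<le> norm (C\<^sup>2 * indicator ?Sq z :: real)"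
      by (intro AE_I2) (auto simp: indicator_def)
  qed (use Sq K in measurable)
  moreover have "(\<lambda>z. indicator ?Sq z *\<^sub>R K z) \<in> borel_measurable lborel"
    using Sq K by measurable
  ultimately show ?thesis
    unfolding L2_unit_square_def set_borel_measurable_def set_integrable_def by simp
qed

lemma measure_UN_ball_le:
  fixes P :: "real set"
  assumes P: "finite P" and r: "0 \<le> r"
  shows "(\<Union>e\<in>P. ball e r) \<in> fmeasurable lborel" "measure lborel (\<Union>e\<in>P. ball e r) \<le> 2 * r * card P"
proof -
  show "(\<Union>e\<in>P. ball e r) \<in> fmeasurable lborel"
    using P by (intro fmeasurableI emeasure_bounded_finite) auto
  have "measure lborel (\<Union>e\<in>P. ball e r) \<le> (\<Sum>e\<in>P. measure lborel (ball e r))"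
    using P by (intro measure_UNION_le) auto
  also have "\<dots> = 2 * r * card P"
    using r by (simp add: ball_eq_greaterThanLessThan)
  finally show "measure lborel (\<Union>e\<in>P. ball e r) \<le> 2 * r * card P" .
qed

lemma endpoint_nbhd_measure:
  assumes T: "finite T" and r: "0 \<le> r"
  shows "endpoint_nbhd T r \<in> fmeasurable lborel"
    "measure lborel (endpoint_nbhd T r) \<le> 2 * r * (2 * card T + 1)"
proof -
  let ?P = "insert 1 (Inf ` T \<union> Sup ` T)"
  have P: "finite ?P" using T by simp
  show "endpoint_nbhd T r \<in> fmeasurable lborel"
    unfolding endpoint_nbhd_def using measure_UN_ball_le(1)[OF P r] .
  have "card ?P \<le> card (Inf ` T \<union> Sup ` T) + 1" using T by (simp add: card_insert_if)
  also have "\<dots> \<le> card T + card T + 1"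
    using card_Un_le[of "Inf ` T" "Sup ` T"] card_image_le[OF T, of Inf] card_image_le[OF T, of Sup]
    by linarith
  finally have "real (card ?P) \<le> 2 * card T + 1" by linarith
  then have "2 * r * card ?P \<le> 2 * r * (2 * card T + 1)" using r by (intro mult_left_mono) auto
  then show "measure lborel (endpoint_nbhd T r) \<le> 2 * r * (2 * card T + 1)"
    unfolding endpoint_nbhd_def using measure_UN_ball_le(2)[OF P r] by linarith
qed

definition projector_kernel :: "real set set \<Rightarrow> real set \<Rightarrow> real \<times> real \<Rightarrow> real" where
  "projector_kernel Js I z = (\<Sum>J\<in>Js. indicator (J \<times> J) z / len J) - indicator (I \<times> I) z / len I"

lemma projector_kernel_bound:
  assumes "finite Js"
  shows "\<bar>projector_kernel Js I z\<bar> \<le> (\<Sum>J\<in>Js. 1 / len J) + 1 / len I"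
proof -
  have "\<bar>\<Sum>J\<in>Js. indicator (J \<times> J) z / len J\<bar> \<le> (\<Sum>J\<in>Js. \<bar>indicator (J \<times> J) z / len J\<bar>)"
    by (rule sum_abs)
  also have "\<dots> \<le> (\<Sum>J\<in>Js. 1 / len J)"
    by (intro sum_mono) (simp add: indicator_def)
  finally have "\<bar>\<Sum>J\<in>Js. indicator (J \<times> J) z / len J\<bar> \<le> (\<Sum>J\<in>Js. 1 / len J)" .
  moreover have "\<bar>indicator (I \<times> I) z / len I\<bar> \<le> 1 / len I"
    by (simp add: indicator_def)
  ultimately show ?thesis unfolding projector_kernel_def by linarith
qed

lemma projector_kernel_measurable:
  assumes "I \<in> sets borel" "\<forall>J\<in>Js. J \<in> sets borel"
  shows "projector_kernel Js I \<in> borel_measurable lborel"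
proof -
  have "(\<lambda>z. projector_kernel Js I z) \<in> borel_measurable lborel"
    unfolding projector_kernel_def using assms emeasure_lborel_Times(1)
    by (intro borel_measurable_diff borel_measurable_sum borel_measurable_divide
        borel_measurable_indicator measurable_const) auto
  then show ?thesis by simp
qed

lemma projector_kernel_cong:
  assumes "\<forall>S\<in>insert I Js. (s \<in> S \<longleftrightarrow> s' \<in> S) \<and> (t \<in> S \<longleftrightarrow> t' \<in> S)"
  shows "projector_kernel Js I (s, t) = projector_kernel Js I (s', t')"
proof -
  have "indicator (S \<times> S) (s, t) = (indicator (S \<times> S) (s', t') :: real)" if "S \<in> insert I Js" for S
  proof -
    have "(s \<in> S \<longleftrightarrow> s' \<in> S) \<and> (t \<in> S \<longleftrightarrow> t' \<in> S)" using assms that by blast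
    then show ?thesis by (simp add: indicator_def)
  qed
  then show ?thesis unfolding projector_kernel_def by simp
qed

lemma projector_kernel_same_child:
  assumes Js: "finite Js" "pairwise disjnt Js" and J: "J \<in> Js" "J \<subseteq> I" and st: "s \<in> J" "t \<in> J"
  shows "projector_kernel Js I (s, t) = 1 / len J - 1 / len I"
proof -
  have "indicator (J' \<times> J') (s, t) / len J' = (if J' = J then 1 / len J' else 0)" if "J' \<in> Js" for J'
  proof (cases "J' = J")
    case True
    then show ?thesis using st by (simp add: indicator_def)
  next
    case False
    then have "s \<notin> J'" using Js(2) J(1) st(1) that unfolding pairwise_def disjnt_def by blast
    then show ?thesis using False by (simp add: indicator_def)
  qed
  then have "(\<Sum>J'\<in>Js. indicator (J' \<times> J') (s, t) / len J') = (\<Sum>J'\<in>Js. if J' = J then 1 / len J' else 0)"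
    by (rule sum.cong[OF refl])
  also have "\<dots> = 1 / len J" using Js(1) J(1) by simp
  finally show ?thesis using J(2) st by (simp add: projector_kernel_def indicator_def subset_iff)
qed

lemma projector_kernel_no_common_child:
  assumes "\<not> (\<exists>J\<in>Js. s \<in> J \<and> t \<in> J)"
  shows "projector_kernel Js I (s, t) = - indicator (I \<times> I) (s, t) / len I"
proof -
  have "(\<Sum>J\<in>Js. indicator (J \<times> J) (s, t) / len J) = (0::real)"
    using assms by (intro sum.neutral) (auto simp: indicator_def)
  then show ?thesis by (simp add: projector_kernel_def)
qed

lemma proj_matrix_eq_projector_kernel:
  assumes part: "nested_partitions M Ups" and lev: "1 \<le> l" "l < M" and I: "I \<in> Ups l"
    and vs: "valid_sample M Ups n xs" and n: "n > 0"
  shows "real n * proj_matrix Ups l I n xs i j = projector_kernel (children Ups l I) I (xs i, xs j)"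
proof -
  define Js where "Js = children Ups l I"
  note Js = nested_partitions_children[OF part lev, of I, folded Js_def]
  have scaled: "real n * (1 / mcount n xs J) = 1 / len J" if "J \<in> insert I Js" for J
  proof -
    have "l \<in> {1..M}" "Suc l \<in> {1..M}" using lev by auto
    then have "mcount n xs J = real n * len J"
      using that I Js(1) mcount_eq_len[OF part vs] by blast
    then show ?thesis using n by simp
  qed
  have sub: "J \<subseteq> I" if "J \<in> Js" for J using that by (simp add: Js_def children_def)
  consider (same) J where "J \<in> Js" "xs i \<in> J" "xs j \<in> J"
    | (different) "xs i \<in> I" "xs j \<in> I" "\<not> (\<exists>J\<in>Js. xs i \<in> J \<and> xs j \<in> J)"
    | (outside) "\<not> (xs i \<in> I \<and> xs j \<in> I)"
    using sub by blast
  then show ?thesis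
  proof cases
    case same
    have "(THE J'. J' \<in> Js \<and> xs i \<in> J') = J"
      using Js(3) same unfolding pairwise_def disjnt_def by (intro the_equality) blast+
    moreover have "xs i \<in> I" "xs j \<in> I" using same sub by blast+
    ultimately have "proj_matrix Ups l I n xs i j = 1 / mcount n xs J - 1 / mcount n xs I"
      using same unfolding proj_matrix_def Js_def[symmetric] by auto
    then show ?thesis
      using scaled[of I] scaled[of J] same sub projector_kernel_same_child[OF Js(2,3)]
      by (simp add: right_diff_distrib Js_def)
  next
    case different
    then have "proj_matrix Ups l I n xs i j = - (1 / mcount n xs I)"
      unfolding proj_matrix_def Js_def[symmetric] by auto
    then show ?thesis
      using different scaled[of I] projector_kernel_no_common_child[of Js]
      by (simp add: Js_def indicator_def)
  next
    case outside
    then have "proj_matrix Ups l I n xs i j = 0"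
      unfolding proj_matrix_def by (simp only: if_False)
    moreover have "\<not> (\<exists>J\<in>Js. xs i \<in> J \<and> xs j \<in> J)" using outside sub by blast
    ultimately show ?thesis
      using outside projector_kernel_no_common_child[of Js] by (simp add: Js_def indicator_def)
  qed
qed

lemma step_kernel_proj_matrix:
  assumes part: "nested_partitions M Ups" and lev: "1 \<le> l" "l < M" and I: "I \<in> Ups l"
    and vs: "valid_sample M Ups n xs" and n: "n > 0"
  shows "step_kernel n (\<lambda>i j. real n * proj_matrix Ups l I n xs i j) (a, b)
    = projector_kernel (children Ups l I) I (xs (nat \<lfloor>real n * a\<rfloor> + 1), xs (nat \<lfloor>real n * b\<rfloor> + 1))"
  unfolding step_kernel_def using proj_matrix_eq_projector_kernel[OF part lev I vs n] by simp

lemma step_kernel_proj_matrix_off_endpoints: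
  assumes part: "nested_partitions M Ups" and lev: "1 \<le> l" "l < M" and I: "I \<in> Ups l"
    and vs: "valid_sample M Ups n xs" and n: "n > 0"
    and ab: "a \<in> {0..1}" "b \<in> {0..1}"
    and far: "a \<notin> endpoint_nbhd (insert I (children Ups l I)) (1 / real n)"
      "b \<notin> endpoint_nbhd (insert I (children Ups l I)) (1 / real n)"
  shows "step_kernel n (\<lambda>i j. real n * proj_matrix Ups l I n xs i j) (a, b)
    = projector_kernel (children Ups l I) I (a, b)"
proof -
  note same_side = sample_point_same_side_off_endpoints[OF vs n is_interval_insert_children[OF part lev I]]
  have "\<forall>S\<in>insert I (children Ups l I). (xs (nat \<lfloor>real n * a\<rfloor> + 1) \<in> S \<longleftrightarrow> a \<in> S)
      \<and> (xs (nat \<lfloor>real n * b\<rfloor> + 1) \<in> S \<longleftrightarrow> b \<in> S)"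
    using same_side[OF _ ab(1) far(1)] same_side[OF _ ab(2) far(2)] by blast
  then show ?thesis
    unfolding step_kernel_proj_matrix[OF part lev I vs n] by (rule projector_kernel_cong)
qed

lemma hs_dist_step_kernel_le:
  assumes part: "nested_partitions M Ups" and lev: "1 \<le> l" "l < M" and I: "I \<in> Ups l"
  obtains D where "\<And>n xs. n > 0 \<Longrightarrow> valid_sample M Ups n xs \<Longrightarrow>
      hs_dist (step_kernel n (\<lambda>i j. real n * proj_matrix Ups l I n xs i j))
        (projector_kernel (children Ups l I) I) \<le> sqrt (D / real n)"
proof -
  define Js where "Js = children Ups l I"
  define K where "K = projector_kernel Js I"
  define C where "C = (\<Sum>J\<in>Js. 1 / len J) + 1 / len I"
  define m where "m = 2 * real (card (insert I Js)) + 1"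
  note Js = nested_partitions_children[OF part lev, of I, folded Js_def]
  have K_bound: "\<bar>K z\<bar> \<le> C" for z
    unfolding K_def C_def using projector_kernel_bound[OF Js(2)] .
  show ?thesis
  proof (rule that[of "16 * C\<^sup>2 * m"])
    fix n xs assume n: "n > 0" and vs: "valid_sample M Ups n xs"
    define G where "G = step_kernel n (\<lambda>i j. real n * proj_matrix Ups l I n xs i j)"
    define B where "B = endpoint_nbhd (insert I Js) (1 / real n)"
    have diff_bound: "\<bar>G z - K z\<bar> \<le> 2 * C" for z
    proof -
      have "\<bar>G z\<bar> \<le> C"
        using step_kernel_proj_matrix[OF part lev I vs n] K_bound by (cases z) (simp add: G_def K_def Js_def)
      then show ?thesis using abs_triangle_ineq4[of "G z" "K z"] K_bound[of z] by linarith
    qed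
    have diff_zero: "G (a, b) - K (a, b) = 0"
      if "a \<in> {0..1}" "b \<in> {0..1}" "a \<notin> B" "b \<notin> B" for a b
      using step_kernel_proj_matrix_off_endpoints[OF part lev I vs n that(1,2)] that(3,4)
      by (simp add: G_def K_def Js_def B_def)
    note B = endpoint_nbhd_measure[of "insert I Js" "1 / real n", folded B_def]
    have B_small: "measure lborel B \<le> 2 * (1 / real n) * m"
      using B(2) Js(2) unfolding m_def by (simp add: add.commute)
    have "(LINT z:{0..1} \<times> {0..1}|lborel. (G z - K z)\<^sup>2) \<le> 2 * (2 * C)\<^sup>2 * measure lborel B"
      using Js(2) by (intro set_integral_square_le_strips[where F = "\<lambda>z. G z - K z", OF _ diff_bound diff_zero] B(1)) simp_all
    also have "\<dots> \<le> 2 * (2 * C)\<^sup>2 * (2 * (1 / real n) * m)"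
      using B_small by (intro mult_left_mono) auto
    also have "\<dots> = 16 * C\<^sup>2 * m / real n"
      by (simp add: power_mult_distrib)
    finally show "hs_dist G (projector_kernel (children Ups l I) I) \<le> sqrt (16 * C\<^sup>2 * m / real n)"
      unfolding hs_dist_def K_def Js_def by (rule real_sqrt_le_mono)
  qed
qed

lemma L2_unit_square_projector_kernel:
  assumes part: "nested_partitions M Ups" and lev: "1 \<le> l" "l < M" and I: "I \<in> Ups l"
  shows "L2_unit_square (projector_kernel (children Ups l I) I)"
proof (rule L2_unit_square_bounded)
  show "projector_kernel (children Ups l I) I \<in> borel_measurable lborel"
    using is_interval_insert_children[OF part lev I] real_interval_borel_measurable
    by (intro projector_kernel_measurable) auto
  show "\<bar>projector_kernel (children Ups l I) I z\<bar> \<le> (\<Sum>J\<in>children Ups l I. 1 / len J) + 1 / len I" for z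
    using nested_partitions_children(2)[OF part lev] by (rule projector_kernel_bound)
qed

lemma LIMSEQ_le_sqrt_const_over_n:
  fixes f :: "nat \<Rightarrow> real"
  assumes "\<And>k. 0 \<le> f k" and "\<And>k. k \<ge> 1 \<Longrightarrow> f k \<le> sqrt (D / real k)"
  shows "f \<longlonglongrightarrow> 0"
proof (rule tendsto_sandwich[OF _ _ tendsto_const])
  show "(\<lambda>k. sqrt (D / real k)) \<longlonglongrightarrow> 0"
    using tendsto_real_sqrt[OF lim_const_over_n[of D]] by simp
  show "\<forall>\<^sub>F k in sequentially. 0 \<le> f k" using assms(1) by simp
  show "\<forall>\<^sub>F k in sequentially. f k \<le> sqrt (D / real k)"
    unfolding eventually_sequentially using assms(2) by blast
qed

theorem proposition8p1:
  fixes M :: nat and Ups :: "nat \<Rightarrow> real set set"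
    and h :: "real set \<Rightarrow> real" and w :: "real \<Rightarrow> real"
    and x :: "nat \<Rightarrow> nat \<Rightarrow> real"
    and l :: nat and I :: "real set"
  assumes part: "nested_partitions M Ups"
    and h_pos: "\<forall>l\<in>{1..M}. \<forall>J\<in>Ups l. 0 < h J"
    and h_mono: "\<forall>l\<in>{1..M}. \<forall>l'\<in>{1..M}. \<forall>J\<in>Ups l. \<forall>J'\<in>Ups l'. J \<subset> J' \<longrightarrow> h J < h J'"
    and w_range: "\<forall>t\<ge>0. 0 < w t \<and> w t \<le> 1"
    and rat_len: "\<forall>J\<in>Ups M. len J \<in> \<rat>"
    and sample: "\<forall>k\<ge>1. valid_sample M Ups (k * sample_N M Ups) (x k)"
    and lev: "1 \<le> l" "l < M" and I: "I \<in> Ups l"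
  shows "\<exists>E. L2_unit_square E \<and>
    (\<lambda>k. hs_dist
           (step_kernel (k * sample_N M Ups)
              (\<lambda>i j. real (k * sample_N M Ups) *
                       proj_matrix Ups l I (k * sample_N M Ups) (x k) i j))
           E) \<longlonglongrightarrow> 0"
proof -
  define N where "N = sample_N M Ups"
  obtain D where bound: "\<And>n xs. n > 0 \<Longrightarrow> valid_sample M Ups n xs \<Longrightarrow>
      hs_dist (step_kernel n (\<lambda>i j. real n * proj_matrix Ups l I n xs i j))
        (projector_kernel (children Ups l I) I) \<le> sqrt (D / real n)"
    using hs_dist_step_kernel_le[OF part lev I] by blast
  have N: "N > 0" using sample_N_pos[OF part] by (simp add: N_def)
  have "(\<lambda>k. hs_dist (step_kernel (k * N) (\<lambda>i j. real (k * N) * proj_matrix Ups l I (k * N) (x k) i j))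
      (projector_kernel (children Ups l I) I)) \<longlonglongrightarrow> 0"
  proof (rule LIMSEQ_le_sqrt_const_over_n[OF hs_dist_nonneg])
    fix k :: nat assume k: "k \<ge> 1"
    have "valid_sample M Ups (k * N) (x k)" using sample k by (simp add: N_def)
    then show "hs_dist (step_kernel (k * N) (\<lambda>i j. real (k * N) * proj_matrix Ups l I (k * N) (x k) i j))
        (projector_kernel (children Ups l I) I) \<le> sqrt (D / real N / real k)"
      using bound[of "k * N"] k N by (simp add: divide_divide_eq_left mult.commute)
  qed
  then show ?thesis
    using L2_unit_square_projector_kernel[OF part lev I] unfolding N_def by blast
qed

end
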